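(* Let $X$ be a finite set and $k$ an integer with $k\ge 5$ and $|X|-k\ge 7$. Let $\mathcal{F}$ be a clone on $X$ such that either $g^*\in\mathcal{F}$, where $g^*(x_1,x_2,x_3)=x_2$ if $x_2=x_3$ and $g^*(x_1,x_2,x_3)=x_1$ otherwise, or (weaker) for every one-to-one $\bar a^*\in X^3$ there is $g_{\bar a^*}\in\mathcal{F}$ with $g_{\bar a^*}(\bar a^* )=a^*_1$ and $g_{\bar a^*}(\bar a)=g^*(\bar a)$ for every $\bar a\in X^3$ with a repetition. Let $\mathfrak{C}$ be a nonempty symmetric family of choice functions for $\binom{X}{k}$ closed under every $f\in\mathcal{F}$. Then $\mathfrak{C}$ is full.
   Context: A clone on $X$: set of finitary operations on $X$ containing all projections and closed under composition. $\binom{X}{k}=\{Y\subseteq X:|Y|=k\}$; a choice function $c$ satisfies $c(Y)\in Y$. Symmetric: for every permutation $\pi$ of $X$ and $c\in\mathfrak{C}$, $(\pi*c)(Y)=\pi^{-1}(c(\pi(Y)))$ is in $\mathfrak{C}$. Closed under $f$ ($n$-place): for $c_1,\dots,c_n\in\mathfrak{C}$, $Y\mapsto f(c_1(Y),\dots,c_n(Y))$ is in $\mathfrak{C}$. Full: every choice function for $\binom{X}{k}$ is in $\mathfrak{C}$. *)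

theory Defs
  imports Main
begin

text \<open>A finitary operation on X is represented as a pair (n, f) with n > 0 its arity
  and f :: 'a list => 'a, where only the values on lists of length n over X matter.\<close>

definition tuples :: "'a set \<Rightarrow> nat \<Rightarrow> 'a list set" where
  "tuples X n = {xs. length xs = n \<and> set xs \<subseteq> X}"

definition clone_on :: "'a set \<Rightarrow> (nat \<times> ('a list \<Rightarrow> 'a)) set \<Rightarrow> bool" where
  "clone_on X F \<longleftrightarrow>
     (\<forall>(n, f) \<in> F. 0 < n \<and> (\<forall>xs \<in> tuples X n. f xs \<in> X)) \<and>
     (\<forall>n i. i < n \<longrightarrow> (n, \<lambda>xs. xs ! i) \<in> F) \<and>
     (\<forall>(m, f) \<in> F. \<forall>n gs. 0 < n \<and> length gs = m \<and> (\<forall>g \<in> set gs. (n, g) \<in> F) \<longrightarrow>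
        (n, \<lambda>xs. f (map (\<lambda>g. g xs) gs)) \<in> F)"

definition gstar :: "'a list \<Rightarrow> 'a" where
  "gstar xs = (if xs ! 1 = xs ! 2 then xs ! 1 else xs ! 0)"

definition binom :: "'a set \<Rightarrow> nat \<Rightarrow> 'a set set" where
  "binom X k = {Y. Y \<subseteq> X \<and> finite Y \<and> card Y = k}"

definition choice_fun :: "'a set \<Rightarrow> nat \<Rightarrow> ('a set \<Rightarrow> 'a) \<Rightarrow> bool" where
  "choice_fun X k c \<longleftrightarrow> (\<forall>Y \<in> binom X k. c Y \<in> Y) \<and> (\<forall>Y. Y \<notin> binom X k \<longrightarrow> c Y = undefined)"

definition perm_act :: "'a set \<Rightarrow> nat \<Rightarrow> ('a \<Rightarrow> 'a) \<Rightarrow> ('a set \<Rightarrow> 'a) \<Rightarrow> ('a set \<Rightarrow> 'a)" where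
  "perm_act X k \<pi> c = (\<lambda>Y. if Y \<in> binom X k then the_inv_into X \<pi> (c (\<pi> ` Y)) else undefined)"

definition symmetric_family :: "'a set \<Rightarrow> nat \<Rightarrow> ('a set \<Rightarrow> 'a) set \<Rightarrow> bool" where
  "symmetric_family X k C \<longleftrightarrow>
     (\<forall>\<pi> c. bij_betw \<pi> X X \<and> c \<in> C \<longrightarrow> perm_act X k \<pi> c \<in> C)"

definition closed_under :: "'a set \<Rightarrow> nat \<Rightarrow> ('a set \<Rightarrow> 'a) set \<Rightarrow> nat \<times> ('a list \<Rightarrow> 'a) \<Rightarrow> bool" where
  "closed_under X k C nf \<longleftrightarrow>
     (\<forall>cs. length cs = fst nf \<and> set cs \<subseteq> C \<longrightarrow>
        (\<lambda>Y. if Y \<in> binom X k then snd nf (map (\<lambda>c. c Y) cs) else undefined) \<in> C)"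

definition full_family :: "'a set \<Rightarrow> nat \<Rightarrow> ('a set \<Rightarrow> 'a) set \<Rightarrow> bool" where
  "full_family X k C \<longleftrightarrow> (\<forall>c. choice_fun X k c \<longrightarrow> c \<in> C)"

end

theory Submission
  imports Defs "HOL-Library.Disjoint_Sets"
begin

text \<open>Each operation granted by the hypothesis acts as a majority on triples with a repetition, so
  by the Baker--Pixley argument a choice function d lies in C as soon as, for any two k-sets
  Y1, Y2, some member of C agrees with d on both.  Call values y1 \<in> Y1, y2 \<in> Y2 realizable if
  some c \<in> C has c Y1 = y1 and c Y2 = y2.  By the symmetry of C this only depends on
  card (Y1 \<inter> Y2) and on which of y1 \<in> Y2, y2 \<in> Y1, y1 = y2 hold.  Moreover, if y1 is
  realizable together with two distinct values v, v' on Y2, it is so with every q \<in> Y2: combine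
  witnesses for (p, q), (y1, v), (y1, v') by the operation that sends (q, v, v') to q and is a
  majority on (p, y1, y1).  Starting from the pattern shown by any single member of C, this
  spreading, together with two explicit configurations for intersections of size 1 and k - 1,
  makes every pattern realizable for every intersection size.\<close>

section \<open>Relabelling permutations of a finite set\<close>

lemma bij_betw_preserving_labels:
  assumes "finite X" and same_card: "\<And>l. card {x\<in>X. L1 x = l} = card {x\<in>X. L2 x = l}"
  obtains p where "bij_betw p X X" and "\<And>x. x \<in> X \<Longrightarrow> L2 (p x) = L1 x"
proof -
  have "\<forall>l. \<exists>f. bij_betw f {x\<in>X. L1 x = l} {x\<in>X. L2 x = l}"
    using assms by (auto intro: finite_same_card_bij)
  then obtain F where F: "\<And>l. bij_betw (F l) {x\<in>X. L1 x = l} {x\<in>X. L2 x = l}"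
    by metis
  define p where "p x = F (L1 x) x" for x
  have cell: "bij_betw p {x\<in>X. L1 x = l} {x\<in>X. L2 x = l}" for l
    using F[of l] by (rule bij_betw_cong[THEN iffD1, rotated]) (simp add: p_def)
  then have "bij_betw p (\<Union>l. {x\<in>X. L1 x = l}) (\<Union>l. {x\<in>X. L2 x = l})"
    by (intro bij_betw_UNION_disjoint) (auto simp: disjoint_family_on_def)
  moreover have "(\<Union>l. {x\<in>X. L x = l}) = X" for L :: "'a \<Rightarrow> 'b"
    by auto
  ultimately have "bij_betw p X X"
    by simp
  moreover have "L2 (p x) = L1 x" if "x \<in> X" for x
    using bij_betwE[OF cell[of "L1 x"]] that by auto
  ultimately show thesis
    using that by blast
qed

lemma card_Venn_cell_eq:
  assumes "finite X" and sub: "Y1 \<subseteq> X" "Y2 \<subseteq> X" "Z1 \<subseteq> X" "Z2 \<subseteq> X"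
    and card_eq: "card Y1 = card Z1" "card Y2 = card Z2" "card (Y1 \<inter> Y2) = card (Z1 \<inter> Z2)"
  shows "card {x\<in>X. (x \<in> Y1 \<longleftrightarrow> a) \<and> (x \<in> Y2 \<longleftrightarrow> b)} = card {x\<in>X. (x \<in> Z1 \<longleftrightarrow> a) \<and> (x \<in> Z2 \<longleftrightarrow> b)}"
proof -
  have fin: "finite Y1" "finite Y2" "finite Z1" "finite Z2"
    using sub assms(1) by (auto intro: finite_subset)
  have "card (Y1 \<union> Y2) = card (Z1 \<union> Z2)"
    using card_Un_Int[of Y1 Y2] card_Un_Int[of Z1 Z2] fin card_eq by linarith
  moreover have "{x\<in>X. (x \<in> A \<longleftrightarrow> a) \<and> (x \<in> B \<longleftrightarrow> b)} =
      (if a then if b then A \<inter> B else A - B else if b then B - A else X - (A \<union> B))"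
    if "A \<subseteq> X" "B \<subseteq> X" for A B
    using that by auto
  moreover have "X \<inter> (Y1 \<union> Y2) = Y1 \<union> Y2" "X \<inter> (Z1 \<union> Z2) = Z1 \<union> Z2"
    using sub by auto
  ultimately show ?thesis
    using sub fin card_eq by (simp add: card_Diff_subset_Int Int_commute)
qed

lemma card_pair_Int:
  "card ({p, q} \<inter> S) = (if p \<in> S then 1 else 0) + (if q \<in> S \<and> q \<noteq> p then 1 else 0)"
  by (cases "p \<in> S"; cases "q \<in> S"; cases "p = q") (simp_all add: Int_insert_left)

lemma card_pair_Int_eq:
  assumes "y1 \<in> A \<longleftrightarrow> z1 \<in> B" "y2 \<in> A \<longleftrightarrow> z2 \<in> B" "y1 = y2 \<longleftrightarrow> z1 = z2"
  shows "card ({y1, y2} \<inter> A) = card ({z1, z2} \<inter> B)"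
  unfolding card_pair_Int using assms by (simp add: eq_commute)

lemma card_marked_Venn_cell_eq:
  assumes "finite X" and sub: "Y1 \<subseteq> X" "Y2 \<subseteq> X" "Z1 \<subseteq> X" "Z2 \<subseteq> X"
    and card_eq: "card Y1 = card Z1" "card Y2 = card Z2" "card (Y1 \<inter> Y2) = card (Z1 \<inter> Z2)"
    and mem: "y1 \<in> Y1" "y2 \<in> Y2" "z1 \<in> Z1" "z2 \<in> Z2"
    and pattern: "y1 \<in> Y2 \<longleftrightarrow> z1 \<in> Z2" "y2 \<in> Y1 \<longleftrightarrow> z2 \<in> Z1" "y1 = y2 \<longleftrightarrow> z1 = z2"
  shows "card {x\<in>X. (x \<in> Y1, x \<in> Y2, x = y1, x = y2) = l} =
    card {x\<in>X. (x \<in> Z1, x \<in> Z2, x = z1, x = z2) = l}"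
proof -
  obtain a b e f where l: "l = (a, b, e, f)"
    by (cases l) auto
  have pts: "y1 \<in> X" "y2 \<in> X" "z1 \<in> X" "z2 \<in> X"
    using sub mem by auto
  show ?thesis
  proof (cases "e \<or> f")
    case True
    then have "{x\<in>X. (x \<in> A, x \<in> B, x = p, x = q) = l} = {p, q} \<inter> {x. (x \<in> A, x \<in> B, x = p, x = q) = l}"
      if "p \<in> X" "q \<in> X" for A B p q
      using that l by auto
    moreover have "card ({y1, y2} \<inter> {x. (x \<in> Y1, x \<in> Y2, x = y1, x = y2) = l}) =
        card ({z1, z2} \<inter> {x. (x \<in> Z1, x \<in> Z2, x = z1, x = z2) = l})"
      by (rule card_pair_Int_eq) (use mem pattern in auto)
    ultimately show ?thesis
      using pts by simp
  next
    case False
    define cellY where "cellY = {x\<in>X. (x \<in> Y1 \<longleftrightarrow> a) \<and> (x \<in> Y2 \<longleftrightarrow> b)}"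
    define cellZ where "cellZ = {x\<in>X. (x \<in> Z1 \<longleftrightarrow> a) \<and> (x \<in> Z2 \<longleftrightarrow> b)}"
    have "{x\<in>X. (x \<in> Y1, x \<in> Y2, x = y1, x = y2) = l} = cellY - {y1, y2}"
      "{x\<in>X. (x \<in> Z1, x \<in> Z2, x = z1, x = z2) = l} = cellZ - {z1, z2}"
      using False l by (auto simp: cellY_def cellZ_def)
    moreover have "card ({y1, y2} \<inter> cellY) = card ({z1, z2} \<inter> cellZ)"
      by (rule card_pair_Int_eq) (use pts mem pattern in \<open>auto simp: cellY_def cellZ_def\<close>)
    moreover have "card cellY = card cellZ"
      unfolding cellY_def cellZ_def by (rule card_Venn_cell_eq[OF assms(1) sub card_eq])
    moreover have "finite cellY" "finite cellZ"
      using assms(1) by (auto simp: cellY_def cellZ_def)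
    ultimately show ?thesis
      by (simp add: card_Diff_subset_Int Int_commute)
  qed
qed

lemma obtain_two_distinct:
  assumes "2 \<le> card S"
  obtains a b where "a \<in> S" "b \<in> S" "a \<noteq> b"
proof -
  obtain T where "T \<subseteq> S" "card T = 2"
    using obtain_subset_with_card_n[OF assms] by metis
  then show thesis
    using that card_2_iff[of T] by auto
qed

lemma obtain_three_distinct:
  assumes "3 \<le> card S"
  obtains a b c where "a \<in> S" "b \<in> S" "c \<in> S" "a \<noteq> b" "b \<noteq> c" "a \<noteq> c"
proof -
  obtain T where "T \<subseteq> S" "card T = 3"
    using obtain_subset_with_card_n[OF assms] by metis
  then show thesis
    using that card_3_iff[of T] by auto
qed

lemma subset_pair_if_card_le_2:
  assumes "finite S" "S \<noteq> {}" "card S \<le> 2"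
  obtains a b where "a \<in> S" "b \<in> S" "S \<subseteq> {a, b}"
proof -
  obtain a where a: "a \<in> S"
    using assms(2) by blast
  have "card (S - {a}) \<le> Suc 0"
    using assms a by simp
  then have "\<forall>b1 \<in> S - {a}. \<forall>b2 \<in> S - {a}. b1 = b2"
    using card_le_Suc0_iff_eq[of "S - {a}"] assms(1) by blast
  then show thesis
    using that a by blast
qed

lemma image_eq_if_bij_betw_mem_iff:
  assumes "bij_betw p X X" "Y \<subseteq> X" "Z \<subseteq> X" "\<And>x. x \<in> X \<Longrightarrow> p x \<in> Z \<longleftrightarrow> x \<in> Y"
  shows "p ` Y = Z"
proof
  show "p ` Y \<subseteq> Z"
    using assms by auto
  show "Z \<subseteq> p ` Y"
  proof
    fix z
    assume "z \<in> Z"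
    then obtain x where "x \<in> X" "z = p x"
      using assms(1,3) by (auto simp: bij_betw_def)
    then show "z \<in> p ` Y"
      using assms(4) \<open>z \<in> Z\<close> by auto
  qed
qed

lemma perm_act_eqI:
  assumes "bij_betw p X X" "Y \<in> binom X k" "y \<in> X" "c (p ` Y) = p y"
  shows "perm_act X k p c Y = y"
  using assms the_inv_into_f_f[of p X y] by (simp add: perm_act_def bij_betw_def)

lemma closed_under_3:
  assumes "closed_under X k C (3, g)" "c1 \<in> C" "c2 \<in> C" "c3 \<in> C"
  shows "(\<lambda>Y. if Y \<in> binom X k then g [c1 Y, c2 Y, c3 Y] else undefined) \<in> C"
proof -
  have "length [c1, c2, c3] = fst (3::nat, g) \<and> set [c1, c2, c3] \<subseteq> C"
    using assms by simp
  then have "(\<lambda>Y. if Y \<in> binom X k then snd (3::nat, g) (map (\<lambda>c. c Y) [c1, c2, c3]) else undefined) \<in> C"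
    using assms(1) unfolding closed_under_def by blast
  then show ?thesis
    by (simp cong: if_cong)
qed

lemma choice_fun_eqI:
  assumes "choice_fun X k c" "choice_fun X k d" "\<And>Y. Y \<in> binom X k \<Longrightarrow> c Y = d Y"
  shows "c = d"
proof
  fix Y
  show "c Y = d Y"
    using assms by (cases "Y \<in> binom X k") (auto simp: choice_fun_def)
qed

lemma finite_if_mem_binom: "Y \<in> binom X k \<Longrightarrow> finite Y"
  by (simp add: binom_def)

lemma gstar_repetition: "gstar [x, y, y] = y" "gstar [y, x, y] = y" "gstar [y, y, x] = y"
  by (auto simp: gstar_def)

lemma gstar_distinct: "a \<in> tuples X 3 \<Longrightarrow> distinct a \<Longrightarrow> gstar a = a ! 0"
  by (auto simp: tuples_def gstar_def nth_eq_iff_index_eq)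

section \<open>Realizable pairs of values\<close>

locale gstar_closed_family =
  fixes X :: "'a set" and k :: nat and C :: "('a set \<Rightarrow> 'a) set"
  assumes finite_X: "finite X" and k_ge_5: "5 \<le> k"
    and C_nonempty: "C \<noteq> {}"
    and choice_fun_C: "\<And>c. c \<in> C \<Longrightarrow> choice_fun X k c"
    and symmetric: "symmetric_family X k C"
    and gstar_variant: "\<And>a. a \<in> tuples X 3 \<Longrightarrow> distinct a \<Longrightarrow>
      \<exists>g. closed_under X k C (3, g) \<and> g a = a ! 0 \<and> (\<forall>b \<in> tuples X 3. \<not> distinct b \<longrightarrow> g b = gstar b)"
begin

lemma binom_iff: "Y \<in> binom X k \<longleftrightarrow> Y \<subseteq> X \<and> card Y = k"
  using finite_X by (auto simp: binom_def intro: finite_subset)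

lemma finite_binom: "finite (binom X k)"
  by (rule finite_subset[of _ "Pow X"]) (use finite_X binom_iff in auto)

lemma choice_mem: "c \<in> C \<Longrightarrow> Y \<in> binom X k \<Longrightarrow> c Y \<in> Y"
  using choice_fun_C by (auto simp: choice_fun_def)

lemma choice_mem_X: "c \<in> C \<Longrightarrow> Y \<in> binom X k \<Longrightarrow> c Y \<in> X"
  using choice_mem binom_iff by blast

definition realizable :: "'a set \<Rightarrow> 'a set \<Rightarrow> 'a \<Rightarrow> 'a \<Rightarrow> bool" where
  "realizable Y1 Y2 y1 y2 \<longleftrightarrow> (\<exists>c\<in>C. c Y1 = y1 \<and> c Y2 = y2)"

lemma realizable_commute: "realizable Y1 Y2 y1 y2 \<longleftrightarrow> realizable Y2 Y1 y2 y1"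
  by (auto simp: realizable_def)

lemma realizable_transfer:
  assumes binom: "Y1 \<in> binom X k" "Y2 \<in> binom X k" "Z1 \<in> binom X k" "Z2 \<in> binom X k"
    and card_Int: "card (Y1 \<inter> Y2) = card (Z1 \<inter> Z2)"
    and mem: "y1 \<in> Y1" "y2 \<in> Y2" "z1 \<in> Z1" "z2 \<in> Z2"
    and pattern: "y1 \<in> Y2 \<longleftrightarrow> z1 \<in> Z2" "y2 \<in> Y1 \<longleftrightarrow> z2 \<in> Z1" "y1 = y2 \<longleftrightarrow> z1 = z2"
    and "realizable Z1 Z2 z1 z2"
  shows "realizable Y1 Y2 y1 y2"
proof -
  have sub: "Y1 \<subseteq> X" "Y2 \<subseteq> X" "Z1 \<subseteq> X" "Z2 \<subseteq> X"
    and card_eq: "card Y1 = card Z1" "card Y2 = card Z2"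
    using binom binom_iff by auto
  obtain p where p: "bij_betw p X X"
    and lab: "\<And>x. x \<in> X \<Longrightarrow> (p x \<in> Z1, p x \<in> Z2, p x = z1, p x = z2) = (x \<in> Y1, x \<in> Y2, x = y1, x = y2)"
    using bij_betw_preserving_labels[OF finite_X
        card_marked_Venn_cell_eq[OF finite_X sub card_eq card_Int mem pattern]] by metis
  have "p ` Y1 = Z1"
    by (rule image_eq_if_bij_betw_mem_iff[OF p sub(1,3)]) (use lab in auto)
  moreover have "p ` Y2 = Z2"
    by (rule image_eq_if_bij_betw_mem_iff[OF p sub(2,4)]) (use lab in auto)
  moreover have "y1 \<in> X" "y2 \<in> X"
    using mem sub by auto
  moreover have "p y1 = z1" "p y2 = z2"
    using lab calculation(3,4) by auto
  moreover obtain c where c: "c \<in> C" "c Z1 = z1" "c Z2 = z2"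
    using \<open>realizable Z1 Z2 z1 z2\<close> by (auto simp: realizable_def)
  ultimately have "perm_act X k p c Y1 = y1" "perm_act X k p c Y2 = y2"
    using perm_act_eqI[OF p] binom by auto
  moreover have "perm_act X k p c \<in> C"
    using symmetric p c(1) by (auto simp: symmetric_family_def)
  ultimately show ?thesis
    unfolding realizable_def by blast
qed

lemma realizable_diag:
  assumes "Y \<in> binom X k" "y \<in> Y"
  shows "realizable Y Y y y"
proof -
  obtain c where c: "c \<in> C"
    using C_nonempty by auto
  have "realizable Y Y (c Y) (c Y)"
    using c by (auto simp: realizable_def)
  show ?thesis
    by (rule realizable_transfer[of _ _ Y Y _ _ "c Y" "c Y"])
      (use assms choice_mem[OF c assms(1)] \<open>realizable Y Y (c Y) (c Y)\<close> in simp_all)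
qed

lemma realizable_spread:
  assumes binom: "Y1 \<in> binom X k" "Y2 \<in> binom X k"
    and real: "realizable Y1 Y2 u v" "realizable Y1 Y2 u v'" and "v \<noteq> v'" and "q \<in> Y2"
  shows "realizable Y1 Y2 u q"
proof (cases "q = v \<or> q = v'")
  case True
  then show ?thesis
    using real by auto
next
  case False
  obtain c1 where c1: "c1 \<in> C" "c1 Y2 = q"
    using realizable_diag[OF binom(2) \<open>q \<in> Y2\<close>] by (auto simp: realizable_def)
  obtain c2 where c2: "c2 \<in> C" "c2 Y1 = u" "c2 Y2 = v"
    using real by (auto simp: realizable_def)
  obtain c3 where c3: "c3 \<in> C" "c3 Y1 = u" "c3 Y2 = v'"
    using real by (auto simp: realizable_def)
  have in_X: "c1 Y1 \<in> X" "q \<in> X" "u \<in> X" "v \<in> X" "v' \<in> X"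
    using choice_mem_X c1 c2 c3 binom by metis+
  then have "[q, v, v'] \<in> tuples X 3" "distinct [q, v, v']" "[c1 Y1, u, u] \<in> tuples X 3"
    using False \<open>v \<noteq> v'\<close> by (auto simp: tuples_def)
  then obtain g where g: "closed_under X k C (3, g)" "g [q, v, v'] = q"
    and "g [c1 Y1, u, u] = gstar [c1 Y1, u, u]"
    using gstar_variant[of "[q, v, v']"] by auto
  then have g_maj: "g [c1 Y1, u, u] = u"
    by (simp add: gstar_repetition)
  define c where "c = (\<lambda>Y. if Y \<in> binom X k then g [c1 Y, c2 Y, c3 Y] else undefined)"
  have "c \<in> C"
    unfolding c_def using closed_under_3[OF g(1) c1(1) c2(1) c3(1)] .
  moreover have "c Y1 = u" "c Y2 = q"
    using binom c1 c2 c3 g g_maj by (simp_all add: c_def)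
  ultimately show ?thesis
    by (auto simp: realizable_def)
qed

lemma realizable_spread_left:
  assumes "Y1 \<in> binom X k" "Y2 \<in> binom X k"
    and "realizable Y1 Y2 u v" "realizable Y1 Y2 u' v" "u \<noteq> u'" "p \<in> Y1"
  shows "realizable Y1 Y2 p v"
  using realizable_spread[OF assms(2,1)] assms(3-) realizable_commute by metis

lemma majority_combination:
  assumes "c1 \<in> C" "c2 \<in> C" "c3 \<in> C"
  obtains c where "c \<in> C"
    and "\<And>Y. Y \<in> binom X k \<Longrightarrow> c2 Y = c3 Y \<Longrightarrow> c Y = c2 Y"
    and "\<And>Y. Y \<in> binom X k \<Longrightarrow> c1 Y = c3 Y \<Longrightarrow> c Y = c1 Y"
    and "\<And>Y. Y \<in> binom X k \<Longrightarrow> c1 Y = c2 Y \<Longrightarrow> c Y = c1 Y"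
proof (cases "binom X k = {}")
  case True
  then show thesis
    using that assms(1) by blast
next
  case False
  then obtain Y0 where Y0: "Y0 \<subseteq> X" "card Y0 = k"
    using binom_iff by blast
  then have "3 \<le> card Y0"
    using k_ge_5 by simp
  then obtain a b c where "a \<in> Y0" "b \<in> Y0" "c \<in> Y0" "a \<noteq> b" "b \<noteq> c" "a \<noteq> c"
    by (rule obtain_three_distinct)
  then have "[a, b, c] \<in> tuples X 3" "distinct [a, b, c]"
    using Y0(1) by (auto simp: tuples_def)
  then obtain g where g: "closed_under X k C (3, g)"
    and maj: "\<And>xs. xs \<in> tuples X 3 \<Longrightarrow> \<not> distinct xs \<Longrightarrow> g xs = gstar xs"
    using gstar_variant by blast
  define c where "c = (\<lambda>Y. if Y \<in> binom X k then g [c1 Y, c2 Y, c3 Y] else undefined)"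
  have maj_c: "c Y = gstar [c1 Y, c2 Y, c3 Y]"
    if "Y \<in> binom X k" "\<not> distinct [c1 Y, c2 Y, c3 Y]" for Y
    using that maj[of "[c1 Y, c2 Y, c3 Y]"] choice_mem_X assms by (simp add: c_def tuples_def)
  show thesis
  proof (rule that)
    show "c \<in> C"
      unfolding c_def by (rule closed_under_3[OF g assms])
  qed (use maj_c in \<open>simp_all add: gstar_repetition\<close>)
qed

lemma majority_agreement:
  assumes "c1 \<in> C" "c2 \<in> C" "c3 \<in> C" "S \<subseteq> binom X k"
    and agree: "\<forall>Y\<in>S - {Y1}. c1 Y = d Y" "\<forall>Y\<in>S - {Y2}. c2 Y = d Y" "\<forall>Y\<in>S - {Y3}. c3 Y = d Y"
    and "Y1 \<noteq> Y2" "Y2 \<noteq> Y3" "Y1 \<noteq> Y3"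
  shows "\<exists>c\<in>C. \<forall>Y\<in>S. c Y = d Y"
proof -
  obtain c where "c \<in> C"
    and maj: "\<And>Y. Y \<in> binom X k \<Longrightarrow> c2 Y = c3 Y \<Longrightarrow> c Y = c2 Y"
      "\<And>Y. Y \<in> binom X k \<Longrightarrow> c1 Y = c3 Y \<Longrightarrow> c Y = c1 Y"
      "\<And>Y. Y \<in> binom X k \<Longrightarrow> c1 Y = c2 Y \<Longrightarrow> c Y = c1 Y"
    by (rule majority_combination[OF assms(1-3)]) (rule that)
  have "c Y = d Y" if "Y \<in> S" for Y
  proof -
    have Y_binom: "Y \<in> binom X k"
      using that assms(4) by blast
    consider "Y = Y1" | "Y = Y2" | "Y \<noteq> Y1" "Y \<noteq> Y2"
      by blast
    then show ?thesis
    proof cases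
      case 1
      then have "c2 Y = d Y" "c3 Y = d Y"
        using agree(2,3) that assms(8-10) by blast+
      then show ?thesis
        using maj(1)[OF Y_binom] by metis
    next
      case 2
      then have "c1 Y = d Y" "c3 Y = d Y"
        using agree(1,3) that assms(8-10) by blast+
      then show ?thesis
        using maj(2)[OF Y_binom] by metis
    next
      case 3
      then have "c1 Y = d Y" "c2 Y = d Y"
        using agree(1,2) that by blast+
      then show ?thesis
        using maj(3)[OF Y_binom] by metis
    qed
  qed
  then show ?thesis
    using \<open>c \<in> C\<close> by blast
qed

lemma agreeing_member_if_pairs_realizable:
  assumes pairs: "\<And>Y1 Y2. Y1 \<in> binom X k \<Longrightarrow> Y2 \<in> binom X k \<Longrightarrow> realizable Y1 Y2 (d Y1) (d Y2)"
    and "finite S" "S \<subseteq> binom X k"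
  shows "\<exists>c\<in>C. \<forall>Y\<in>S. c Y = d Y"
  using assms(2,3)
proof (induction S rule: finite_psubset_induct)
  case (psubset S)
  show ?case
  proof (cases "3 \<le> card S")
    case True
    then obtain Y1 Y2 Y3 where Y: "Y1 \<in> S" "Y2 \<in> S" "Y3 \<in> S" "Y1 \<noteq> Y2" "Y2 \<noteq> Y3" "Y1 \<noteq> Y3"
      by (rule obtain_three_distinct)
    have "\<exists>c\<in>C. \<forall>Y\<in>S - {Y'}. c Y = d Y" if "Y' \<in> S" for Y'
      using psubset that by blast
    then obtain c1 c2 c3 where c123: "c1 \<in> C" "c2 \<in> C" "c3 \<in> C"
      and agree: "\<forall>Y\<in>S - {Y1}. c1 Y = d Y" "\<forall>Y\<in>S - {Y2}. c2 Y = d Y" "\<forall>Y\<in>S - {Y3}. c3 Y = d Y"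
      using Y(1-3) by meson
    show ?thesis
      by (rule majority_agreement[OF c123 psubset.prems agree Y(4-6)])
  next
    case False
    show ?thesis
    proof (cases "S = {}")
      case True
      then show ?thesis
        using C_nonempty by blast
    next
      case False
      moreover have "card S \<le> 2"
        using \<open>\<not> 3 \<le> card S\<close> by simp
      ultimately obtain Y1 Y2 where "Y1 \<in> S" "Y2 \<in> S" "S \<subseteq> {Y1, Y2}"
        using subset_pair_if_card_le_2[OF psubset.hyps] by blast
      moreover obtain c where "c \<in> C" "c Y1 = d Y1" "c Y2 = d Y2"
        using pairs[of Y1 Y2] psubset.prems calculation unfolding realizable_def by blast
      ultimately show ?thesis
        by blast
    qed
  qed
qed

lemma mem_if_pairs_realizable:
  assumes d: "choice_fun X k d"
    and pairs: "\<And>Y1 Y2. Y1 \<in> binom X k \<Longrightarrow> Y2 \<in> binom X k \<Longrightarrow> realizable Y1 Y2 (d Y1) (d Y2)"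
  shows "d \<in> C"
proof -
  obtain c where c: "c \<in> C" "\<forall>Y\<in>binom X k. c Y = d Y"
    using agreeing_member_if_pairs_realizable[OF pairs finite_binom subset_refl] by blast
  have "c = d"
    by (rule choice_fun_eqI[OF choice_fun_C[OF c(1)] d]) (use c(2) in blast)
  with c(1) show ?thesis
    by simp
qed

section \<open>Realizability by intersection pattern\<close>

definition meets :: "nat \<Rightarrow> 'a set \<Rightarrow> 'a set \<Rightarrow> bool" where
  "meets j Y1 Y2 \<longleftrightarrow> Y1 \<in> binom X k \<and> Y2 \<in> binom X k \<and> Y1 \<noteq> Y2 \<and> card (Y1 \<inter> Y2) = j"

text \<open>In the suffixes of realized_eq, ..., realized_pp, c stands for a value in Y1 \<inter> Y2 and
  p for a value outside the other set (in Y1 - Y2 in first, in Y2 - Y1 in second position).\<close>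

definition realized_eq :: "nat \<Rightarrow> bool" where
  "realized_eq j \<longleftrightarrow> (\<forall>Y1 Y2 y. meets j Y1 Y2 \<longrightarrow> y \<in> Y1 \<inter> Y2 \<longrightarrow> realizable Y1 Y2 y y)"

definition realized_cc :: "nat \<Rightarrow> bool" where
  "realized_cc j \<longleftrightarrow> (\<forall>Y1 Y2 y1 y2. meets j Y1 Y2 \<longrightarrow> y1 \<in> Y1 \<inter> Y2 \<longrightarrow> y2 \<in> Y1 \<inter> Y2 \<longrightarrow> y1 \<noteq> y2 \<longrightarrow>
     realizable Y1 Y2 y1 y2)"

definition realized_cp :: "nat \<Rightarrow> bool" where
  "realized_cp j \<longleftrightarrow> (\<forall>Y1 Y2 y1 y2. meets j Y1 Y2 \<longrightarrow> y1 \<in> Y1 \<inter> Y2 \<longrightarrow> y2 \<in> Y2 - Y1 \<longrightarrow>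
     realizable Y1 Y2 y1 y2)"

definition realized_pc :: "nat \<Rightarrow> bool" where
  "realized_pc j \<longleftrightarrow> (\<forall>Y1 Y2 y1 y2. meets j Y1 Y2 \<longrightarrow> y1 \<in> Y1 - Y2 \<longrightarrow> y2 \<in> Y1 \<inter> Y2 \<longrightarrow>
     realizable Y1 Y2 y1 y2)"

definition realized_pp :: "nat \<Rightarrow> bool" where
  "realized_pp j \<longleftrightarrow> (\<forall>Y1 Y2 y1 y2. meets j Y1 Y2 \<longrightarrow> y1 \<in> Y1 - Y2 \<longrightarrow> y2 \<in> Y2 - Y1 \<longrightarrow>
     realizable Y1 Y2 y1 y2)"

lemma meets_commute: "meets j Y1 Y2 \<longleftrightarrow> meets j Y2 Y1"
  by (auto simp: meets_def Int_commute)

lemma meets_card: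
  assumes "meets j Y1 Y2"
  shows "j < k" "card (Y1 \<inter> Y2) = j" "card (Y1 - Y2) = k - j" "card (Y2 - Y1) = k - j"
proof -
  have Y: "Y1 \<subseteq> X" "Y2 \<subseteq> X" "card Y1 = k" "card Y2 = k" "Y1 \<noteq> Y2"
    and j: "card (Y1 \<inter> Y2) = j"
    using assms binom_iff by (auto simp: meets_def)
  have fin: "finite Y1" "finite Y2"
    using assms finite_if_mem_binom by (auto simp: meets_def)
  show "card (Y1 \<inter> Y2) = j"
    by (fact j)
  show "card (Y1 - Y2) = k - j"
    using card_Diff_subset_Int[of Y1 Y2] fin Y j by simp
  show "card (Y2 - Y1) = k - j"
    using card_Diff_subset_Int[of Y2 Y1] fin Y j by (simp add: Int_commute)
  have "Y1 \<inter> Y2 \<noteq> Y1 \<or> Y1 \<inter> Y2 \<noteq> Y2"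
    using Y(5) by blast
  then have "card (Y1 \<inter> Y2) < k"
    using psubset_card_mono fin Y(3,4) by (metis Int_lower1 Int_lower2 psubsetI)
  then show "j < k"
    using j by simp
qed

lemma meetsI:
  assumes "Y1 \<in> binom X k" "Y2 \<in> binom X k" "card (Y1 \<inter> Y2) = j" "j < k"
  shows "meets j Y1 Y2"
  using assms binom_iff by (auto simp: meets_def)

lemma meets_binom: "meets j Y1 Y2 \<Longrightarrow> Y1 \<in> binom X k \<and> Y2 \<in> binom X k"
  by (simp add: meets_def)

lemma choice_mem_meets: "meets j Z1 Z2 \<Longrightarrow> c \<in> C \<Longrightarrow> c Z1 \<in> Z1 \<and> c Z2 \<in> Z2"
  using choice_mem by (auto simp: meets_def)

lemma meets_Diff_nonempty:
  assumes "meets j Y1 Y2"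
  shows "Y1 - Y2 \<noteq> {}" "Y2 - Y1 \<noteq> {}"
  using meets_card[OF assms] by (metis card.empty zero_less_diff less_irrefl)+

lemma exchange_binom:
  assumes "Y \<in> binom X k" "a \<in> Y" "b \<in> X - Y"
  shows "insert b (Y - {a}) \<in> binom X k"
  using assms finite_if_mem_binom[OF assms(1)] k_ge_5 binom_iff by (auto simp: card_insert_disjoint)

lemma meets_exchange:
  assumes "Y \<in> binom X k" "a \<in> Y" "b \<in> X - Y"
  shows "meets (k - 1) Y (insert b (Y - {a}))"
proof (rule meetsI[OF assms(1) exchange_binom[OF assms]])
  have "Y \<inter> insert b (Y - {a}) = Y - {a}"
    using assms(3) by auto
  then show "card (Y \<inter> insert b (Y - {a})) = k - 1"
    using assms(1,2) binom_iff by simp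
qed (use k_ge_5 in simp)

lemma meets_exchange_pair:
  assumes "Y \<in> binom X k" "a \<in> Y" "a' \<in> Y" "a \<noteq> a'" "b \<in> X - Y"
  shows "meets (k - 1) (insert b (Y - {a})) (insert b (Y - {a'}))"
proof (rule meetsI[OF exchange_binom[OF assms(1,2,5)] exchange_binom[OF assms(1,3,5)]])
  have "finite Y" "card Y = k"
    using assms(1) finite_if_mem_binom binom_iff by blast+
  moreover have "insert b (Y - {a}) \<inter> insert b (Y - {a'}) = insert b (Y - {a, a'})"
    by auto
  ultimately show "card (insert b (Y - {a}) \<inter> insert b (Y - {a'})) = k - 1"
    using assms k_ge_5 by (simp add: card_Diff_subset)
qed (use k_ge_5 in simp)

lemma realized_pc_iff_cp: "realized_pc j \<longleftrightarrow> realized_cp j"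
  unfolding realized_pc_def realized_cp_def using meets_commute realizable_commute by blast

lemma realizable_from_witness:
  assumes "meets j Y1 Y2" "meets j Z1 Z2" "c \<in> C" "y1 \<in> Y1" "y2 \<in> Y2"
    and "y1 \<in> Y2 \<longleftrightarrow> c Z1 \<in> Z2" "y2 \<in> Y1 \<longleftrightarrow> c Z2 \<in> Z1" "y1 = y2 \<longleftrightarrow> c Z1 = c Z2"
  shows "realizable Y1 Y2 y1 y2"
proof (rule realizable_transfer)
  show "realizable Z1 Z2 (c Z1) (c Z2)"
    using assms(3) by (auto simp: realizable_def)
qed (use assms choice_mem[OF assms(3)] in \<open>auto simp: meets_def\<close>)

lemma realized_ppI:
  assumes Z: "meets j Z1 Z2" "c \<in> C" and "c Z1 \<notin> Z2" "c Z2 \<notin> Z1"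
  shows "realized_pp j"
  unfolding realized_pp_def
proof (intro allI impI)
  fix Y1 Y2 y1 y2
  assume "meets j Y1 Y2" "y1 \<in> Y1 - Y2" "y2 \<in> Y2 - Y1"
  then show "realizable Y1 Y2 y1 y2"
    using assms choice_mem_meets[OF Z] by (intro realizable_from_witness[OF _ Z]) auto
qed

lemma realized_pcI:
  assumes Z: "meets j Z1 Z2" "c \<in> C" and "c Z1 \<notin> Z2" "c Z2 \<in> Z1"
  shows "realized_pc j"
  unfolding realized_pc_def
proof (intro allI impI)
  fix Y1 Y2 y1 y2
  assume "meets j Y1 Y2" "y1 \<in> Y1 - Y2" "y2 \<in> Y1 \<inter> Y2"
  then show "realizable Y1 Y2 y1 y2"
    using assms choice_mem_meets[OF Z] by (intro realizable_from_witness[OF _ Z]) auto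
qed

lemma realized_cpI: "meets j Z1 Z2 \<Longrightarrow> c \<in> C \<Longrightarrow> c Z1 \<in> Z2 \<Longrightarrow> c Z2 \<notin> Z1 \<Longrightarrow> realized_cp j"
  using realized_pcI[of j Z2 Z1 c] meets_commute realized_pc_iff_cp by blast

lemma realized_eqI:
  assumes Z: "meets j Z1 Z2" "c \<in> C" and "c Z1 \<in> Z2" "c Z2 = c Z1"
  shows "realized_eq j"
  unfolding realized_eq_def
proof (intro allI impI)
  fix Y1 Y2 y
  assume "meets j Y1 Y2" "y \<in> Y1 \<inter> Y2"
  then show "realizable Y1 Y2 y y"
    using assms choice_mem_meets[OF Z] by (intro realizable_from_witness[OF _ Z]) auto
qed

lemma realized_ccI:
  assumes Z: "meets j Z1 Z2" "c \<in> C" and "c Z1 \<in> Z2" "c Z2 \<in> Z1" "c Z1 \<noteq> c Z2"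
  shows "realized_cc j"
  unfolding realized_cc_def
proof (intro allI impI)
  fix Y1 Y2 y1 y2
  assume "meets j Y1 Y2" "y1 \<in> Y1 \<inter> Y2" "y2 \<in> Y1 \<inter> Y2" "y1 \<noteq> y2"
  then show "realizable Y1 Y2 y1 y2"
    using assms choice_mem_meets[OF Z] by (intro realizable_from_witness[OF _ Z]) auto
qed

lemma realized_pc_if_pp:
  assumes "realized_pp j" "2 \<le> k - j"
  shows "realized_pc j"
  unfolding realized_pc_def
proof (intro allI impI)
  fix Y1 Y2 y1 y2
  assume meets: "meets j Y1 Y2" and "y1 \<in> Y1 - Y2" "y2 \<in> Y1 \<inter> Y2"
  obtain b b' where "b \<in> Y2 - Y1" "b' \<in> Y2 - Y1" "b \<noteq> b'"
    using obtain_two_distinct meets_card(4)[OF meets] assms(2) by metis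
  then have "realizable Y1 Y2 y1 b" "realizable Y1 Y2 y1 b'"
    using assms(1) meets \<open>y1 \<in> Y1 - Y2\<close> unfolding realized_pp_def by auto
  then show "realizable Y1 Y2 y1 y2"
    using realizable_spread meets_binom[OF meets] \<open>b \<noteq> b'\<close> \<open>y2 \<in> Y1 \<inter> Y2\<close> by blast
qed

lemma realized_eq_cc_if_cp:
  assumes "realized_cp j" "2 \<le> k - j"
  shows "realized_eq j" "realized_cc j"
proof -
  have "realizable Y1 Y2 y1 y2" if meets: "meets j Y1 Y2" and "y1 \<in> Y1 \<inter> Y2" "y2 \<in> Y1 \<inter> Y2" for Y1 Y2 y1 y2
  proof -
    obtain b b' where "b \<in> Y2 - Y1" "b' \<in> Y2 - Y1" "b \<noteq> b'"
      using obtain_two_distinct meets_card(4)[OF meets] assms(2) by metis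
    then have "realizable Y1 Y2 y1 b" "realizable Y1 Y2 y1 b'"
      using assms(1) that unfolding realized_cp_def by auto
    then show ?thesis
      using realizable_spread meets_binom[OF meets] \<open>b \<noteq> b'\<close> that(3) by blast
  qed
  then show "realized_eq j" "realized_cc j"
    unfolding realized_eq_def realized_cc_def by auto
qed

lemma realized_pp_if_cp:
  assumes "realized_cp j" "2 \<le> j"
  shows "realized_pp j"
  unfolding realized_pp_def
proof (intro allI impI)
  fix Y1 Y2 y1 y2
  assume meets: "meets j Y1 Y2" and "y1 \<in> Y1 - Y2" "y2 \<in> Y2 - Y1"
  obtain i i' where "i \<in> Y1 \<inter> Y2" "i' \<in> Y1 \<inter> Y2" "i \<noteq> i'"
    using obtain_two_distinct meets_card(2)[OF meets] assms(2) by metis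
  then have "realizable Y1 Y2 i y2" "realizable Y1 Y2 i' y2"
    using assms(1) meets \<open>y2 \<in> Y2 - Y1\<close> unfolding realized_cp_def by auto
  then show "realizable Y1 Y2 y1 y2"
    using realizable_spread_left meets_binom[OF meets] \<open>i \<noteq> i'\<close> \<open>y1 \<in> Y1 - Y2\<close> by blast
qed

lemma realized_eq_cp_if_cc:
  assumes "realized_cc j" "3 \<le> j"
  shows "realized_eq j" "realized_cp j"
proof -
  have "realizable Y1 Y2 y1 y2" if meets: "meets j Y1 Y2" and "y1 \<in> Y1 \<inter> Y2" "y2 \<in> Y2" for Y1 Y2 y1 y2
  proof -
    have "card (Y1 \<inter> Y2 - {y1}) = j - 1"
      using meets_card(2)[OF meets] that(2) by simp
    then obtain i i' where "i \<in> Y1 \<inter> Y2 - {y1}" "i' \<in> Y1 \<inter> Y2 - {y1}" "i \<noteq> i'"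
      using obtain_two_distinct assms(2) by (metis diff_le_mono numeral_3_eq_3 diff_Suc_1 numeral_2_eq_2)
    then have "realizable Y1 Y2 y1 i" "realizable Y1 Y2 y1 i'"
      using assms(1) that unfolding realized_cc_def by auto
    then show ?thesis
      using realizable_spread meets_binom[OF meets] \<open>i \<noteq> i'\<close> that(3) by blast
  qed
  then show "realized_eq j" "realized_cp j"
    unfolding realized_eq_def realized_cp_def by auto
qed

lemma realized_cc_if_eq_cp:
  assumes "realized_eq j" "realized_cp j"
  shows "realized_cc j"
  unfolding realized_cc_def
proof (intro allI impI)
  fix Y1 Y2 y1 y2
  assume meets: "meets j Y1 Y2" and "y1 \<in> Y1 \<inter> Y2" "y2 \<in> Y1 \<inter> Y2" "y1 \<noteq> y2"
  obtain b where "b \<in> Y2 - Y1"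
    using meets_Diff_nonempty(2)[OF meets] by blast
  then have "realizable Y1 Y2 y1 y1" "realizable Y1 Y2 y1 b" "y1 \<noteq> b"
    using assms meets \<open>y1 \<in> Y1 \<inter> Y2\<close> unfolding realized_eq_def realized_cp_def by auto
  then show "realizable Y1 Y2 y1 y2"
    using realizable_spread meets_binom[OF meets] \<open>y2 \<in> Y1 \<inter> Y2\<close> by blast
qed

lemma realized_pc_or_pp:
  assumes meets: "meets j Y1 Y2"
  shows "realized_pc j \<or> realized_pp j"
proof -
  obtain c where c: "c \<in> C"
    using C_nonempty by blast
  have pc_or_pp: "realized_pc j \<or> realized_pp j" if "meets j Y1 Z" "c Y1 \<notin> Z" for Z
    using realized_pcI[OF that(1) c that(2)] realized_ppI[OF that(1) c that(2)] by blast
  show ?thesis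
  proof (cases "c Y1 \<in> Y2")
    case False
    then show ?thesis
      using pc_or_pp[OF meets] by blast
  next
    case True
    obtain a where a: "a \<in> Y1 - Y2"
      using meets_Diff_nonempty(1)[OF meets] by blast
    define Z where "Z = insert a (Y2 - {c Y1})"
    have binom: "Y1 \<in> binom X k" "Y2 \<in> binom X k"
      using meets_binom[OF meets] by auto
    then have "Z \<in> binom X k"
      unfolding Z_def using exchange_binom True a binom_iff by blast
    moreover have "card (Y1 \<inter> Z) = j"
    proof -
      have "Y1 \<inter> Z = insert a (Y1 \<inter> Y2 - {c Y1})"
        using a unfolding Z_def by auto
      moreover have "c Y1 \<in> Y1 \<inter> Y2" "finite (Y1 \<inter> Y2)"
        using choice_mem[OF c binom(1)] True finite_if_mem_binom[OF binom(1)] by auto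
      moreover from this have "0 < j"
        using meets_card(2)[OF meets] card_gt_0_iff by blast
      ultimately show ?thesis
        using meets_card(2)[OF meets] a by (simp add: card_insert_disjoint)
    qed
    ultimately have "meets j Y1 Z"
      using meetsI binom(1) meets_card(1)[OF meets] by blast
    moreover have "c Y1 \<notin> Z"
      using a True unfolding Z_def by auto
    ultimately show ?thesis
      using pc_or_pp by blast
  qed
qed

lemma choice_forced_at_level_1:
  assumes "\<not> realized_pp 1" "c \<in> C" "Z1 \<in> binom X k" "Z2 \<in> binom X k" "Z1 \<inter> Z2 = {w}" "c Z1 \<noteq> w"
  shows "c Z2 = w"
proof -
  have meets: "meets 1 Z1 Z2"
    using assms(3-5) k_ge_5 by (intro meetsI) auto
  have "c Z1 \<notin> Z2"
    using choice_mem[OF assms(2,3)] assms(5,6) by blast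
  then have "c Z2 \<in> Z1"
    using realized_ppI[OF meets assms(2)] assms(1) by blast
  then show ?thesis
    using choice_mem[OF assms(2,4)] assms(5) by blast
qed

text \<open>Consecutive sets of the chain Y, insert w V, insert u (Y - {w}), B meet in a single
  point, which forces the successive values w, u, w'.\<close>
lemma choice_forced_along_chain:
  assumes no_pp: "\<not> realized_pp 1" and c: "c \<in> C"
    and Y: "Y \<in> binom X k" and V: "V \<subseteq> X - Y" "card V = k - 1" "u \<in> V"
    and w: "w \<in> Y" "w' \<in> Y" "w \<noteq> w'" "c Y \<noteq> w"
  shows "c (insert w (insert w' (V - {u}))) = w'"
proof -
  define S A B where "S = insert w V" and "A = insert u (Y - {w})"
    and "B = insert w (insert w' (V - {u}))"
  have "Y \<subseteq> X" "finite V"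
    using Y binom_iff V(1) finite_X finite_subset by blast+
  moreover have "card (V - {u}) = k - 2"
    using V by simp
  ultimately have S_binom: "S \<in> binom X k" and B_binom: "B \<in> binom X k"
    unfolding S_def B_def binom_iff using V w k_ge_5 by (auto simp: card_insert_if)
  have A_binom: "A \<in> binom X k"
    unfolding A_def using exchange_binom Y V w by blast
  have meet: "Y \<inter> S = {w}" "S \<inter> A = {u}" "A \<inter> B = {w'}" and "u \<noteq> w" "u \<noteq> w'"
    using V w unfolding S_def A_def B_def by auto
  note forced = choice_forced_at_level_1[OF no_pp c]
  have "c S = w"
    using forced[OF Y S_binom meet(1)] w(4) by blast
  then have "c A = u"
    using forced[OF S_binom A_binom meet(2)] \<open>u \<noteq> w\<close> by simp
  then show ?thesis
    using forced[OF A_binom B_binom meet(3)] \<open>u \<noteq> w'\<close> unfolding B_def by simp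
qed

lemma realized_pp_level_1:
  assumes meets: "meets 1 Y Y'"
  shows "realized_pp 1"
proof (rule ccontr)
  assume no_pp: "\<not> realized_pp 1"
  obtain c where c: "c \<in> C"
    using C_nonempty by blast
  have Y: "Y \<in> binom X k" "finite Y" "card Y = k"
    using meets_binom[OF meets] binom_iff finite_if_mem_binom by blast+
  have V: "Y' - Y \<subseteq> X - Y" "card (Y' - Y) = k - 1"
    using meets_card(4)[OF meets] meets_binom[OF meets] binom_iff by auto
  obtain u where u: "u \<in> Y' - Y"
    using meets_Diff_nonempty(2)[OF meets] by blast
  have "2 \<le> card (Y - {c Y})"
    using choice_mem[OF c Y(1)] Y k_ge_5 by simp
  then obtain w1 w2 where w: "w1 \<in> Y - {c Y}" "w2 \<in> Y - {c Y}" "w1 \<noteq> w2"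
    by (rule obtain_two_distinct)
  note forced = choice_forced_along_chain[OF no_pp c Y(1) V u]
  have "c (insert w1 (insert w2 (Y' - Y - {u}))) = w2"
    by (rule forced) (use w in auto)
  moreover have "c (insert w2 (insert w1 (Y' - Y - {u}))) = w1"
    by (rule forced) (use w in auto)
  ultimately show False
    using w(3) by (simp add: insert_commute)
qed

lemma realized_eq_or_cc_if_common_values:
  assumes "meets j Z1 Z2" "c \<in> C" "c Z1 \<in> Z2" "c Z2 \<in> Z1"
  shows "realized_eq j \<or> realized_cc j"
  using realized_eqI[OF assms(1-3)] realized_ccI[OF assms] by metis

lemma obtain_exchange_point:
  assumes "meets (k - 1) Y Y'"
  obtains b where "b \<in> X - Y" and "\<And>a. a \<in> Y \<Longrightarrow> meets (k - 1) Y (insert b (Y - {a}))"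
    and "\<And>a a'. a \<in> Y \<Longrightarrow> a' \<in> Y \<Longrightarrow> a \<noteq> a' \<Longrightarrow>
      meets (k - 1) (insert b (Y - {a})) (insert b (Y - {a'}))"
proof -
  obtain b where "b \<in> Y' - Y"
    using meets_Diff_nonempty(2)[OF assms] by blast
  moreover have "Y \<in> binom X k" "Y' \<subseteq> X"
    using meets_binom[OF assms] binom_iff by auto
  ultimately show thesis
    using that meets_exchange meets_exchange_pair by blast
qed

lemma realized_eq_or_cc_top_level:
  assumes "meets (k - 1) Y Y'"
  shows "realized_eq (k - 1) \<or> realized_cc (k - 1)"
proof -
  obtain c where c: "c \<in> C"
    using C_nonempty by blast
  have Y: "Y \<in> binom X k" "finite Y" "card Y = k"
    using meets_binom[OF assms] binom_iff finite_if_mem_binom by blast+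
  obtain b where b: "b \<in> X - Y" and meets_Y: "\<And>a. a \<in> Y \<Longrightarrow> meets (k - 1) Y (insert b (Y - {a}))"
    and meets_pair: "\<And>a a'. a \<in> Y \<Longrightarrow> a' \<in> Y \<Longrightarrow> a \<noteq> a' \<Longrightarrow>
      meets (k - 1) (insert b (Y - {a})) (insert b (Y - {a'}))"
    using obtain_exchange_point[OF assms] by blast
  have "2 \<le> card (Y - {c Y})"
    using choice_mem[OF c Y(1)] Y k_ge_5 by simp
  then obtain a a' where a: "a \<in> Y - {c Y}" "a' \<in> Y - {c Y}" "a \<noteq> a'"
    by (rule obtain_two_distinct)
  define Z Z' where "Z = insert b (Y - {a})" and "Z' = insert b (Y - {a'})"
  have "c Y \<in> Z" "c Y \<in> Z'" "b \<in> Z" "b \<in> Z'"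
    using choice_mem[OF c Y(1)] a unfolding Z_def Z'_def by auto
  moreover have "c Z \<in> Z" "c Z' \<in> Z'"
    using choice_mem[OF c] meets_binom meets_Y a unfolding Z_def Z'_def by blast+
  ultimately consider "c Z \<in> Y" | "c Z' \<in> Y" | "c Z = b" "c Z' = b"
    unfolding Z_def Z'_def by blast
  then show ?thesis
  proof cases
    case 1
    then show ?thesis
      using realized_eq_or_cc_if_common_values[OF meets_Y c] a \<open>c Y \<in> Z\<close> unfolding Z_def by blast
  next
    case 2
    then show ?thesis
      using realized_eq_or_cc_if_common_values[OF meets_Y c] a \<open>c Y \<in> Z'\<close> unfolding Z'_def by blast
  next
    case 3
    then show ?thesis
      using realized_eq_or_cc_if_common_values[OF meets_pair c] a \<open>b \<in> Z\<close> \<open>b \<in> Z'\<close>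
      unfolding Z_def Z'_def by auto
  qed
qed

lemma realized_cc_or_cp_top_level:
  assumes "meets (k - 1) Y Y'"
  shows "realized_cc (k - 1) \<or> realized_cp (k - 1)"
proof (rule ccontr)
  assume "\<not> (realized_cc (k - 1) \<or> realized_cp (k - 1))"
  obtain c where c: "c \<in> C"
    using C_nonempty by blast
  then have forced: "c Z2 = c Z1" if "meets (k - 1) Z1 Z2" "c Z1 \<in> Z2" for Z1 Z2
    using realized_ccI[OF that(1) c that(2)] realized_cpI[OF that(1) c that(2)]
      \<open>\<not> (realized_cc (k - 1) \<or> realized_cp (k - 1))\<close> by metis
  have Y: "Y \<in> binom X k" "finite Y" "card Y = k"
    using meets_binom[OF assms] binom_iff finite_if_mem_binom by blast+
  obtain b where b: "b \<in> X - Y" and meets_Y: "\<And>a. a \<in> Y \<Longrightarrow> meets (k - 1) Y (insert b (Y - {a}))"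
    and meets_pair: "\<And>a a'. a \<in> Y \<Longrightarrow> a' \<in> Y \<Longrightarrow> a \<noteq> a' \<Longrightarrow>
      meets (k - 1) (insert b (Y - {a})) (insert b (Y - {a'}))"
    using obtain_exchange_point[OF assms] by blast
  define x where "x = c Y"
  have x: "x \<in> Y"
    using choice_mem[OF c Y(1)] by (simp add: x_def)
  have "0 < card (Y - {x})"
    using x Y k_ge_5 by simp
  then obtain a where a: "a \<in> Y - {x}"
    by (auto simp: card_gt_0_iff)
  define Z W where "Z = insert b (Y - {a})" and "W = insert b (Y - {x})"
  have "c Z = x"
    using forced[OF meets_Y] a x unfolding Z_def x_def by auto
  moreover have "c W = b"
  proof (rule ccontr)
    have W_meets: "meets (k - 1) W Y"
      using meets_Y[OF x] meets_commute unfolding W_def by blast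
    then have "c W \<in> W"
      using choice_mem_meets[OF _ c] by blast
    moreover assume "c W \<noteq> b"
    ultimately have "c Y = c W"
      using forced[OF W_meets] unfolding W_def by auto
    then show False
      using \<open>c W \<in> W\<close> b x unfolding W_def x_def by auto
  qed
  then have "c Z = b"
    using forced[OF meets_pair[OF x _ _]] a unfolding Z_def W_def by auto
  ultimately show False
    using b x by auto
qed

lemma all_types_realized_level_0:
  assumes meets: "meets 0 Y1 Y2"
  shows "realized_eq 0 \<and> realized_cc 0 \<and> realized_cp 0 \<and> realized_pc 0 \<and> realized_pp 0"
proof -
  have disjoint: "Z1 \<inter> Z2 = {}" if "meets 0 Z1 Z2" for Z1 Z2
  proof -
    have "finite Z1"
      using meets_binom[OF that] finite_if_mem_binom by blast
    then show ?thesis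
      using meets_card(2)[OF that] by simp
  qed
  obtain c where c: "c \<in> C"
    using C_nonempty by blast
  then have "c Y1 \<notin> Y2" "c Y2 \<notin> Y1"
    using choice_mem_meets[OF meets c] disjoint[OF meets] by auto
  then have "realized_pp 0"
    using realized_ppI[OF meets c] by blast
  moreover have "realized_eq 0" "realized_cc 0" "realized_cp 0" "realized_pc 0"
    using disjoint unfolding realized_eq_def realized_cc_def realized_cp_def realized_pc_def by auto
  ultimately show ?thesis
    by blast
qed

lemma all_types_realized:
  assumes meets: "meets j Y1 Y2"
  shows "realized_eq j \<and> realized_cc j \<and> realized_cp j \<and> realized_pc j \<and> realized_pp j"
proof -
  have "j < k"
    using meets_card(1)[OF meets] .
  then consider "j = 0" | "j = 1" | "2 \<le> j" "j \<le> k - 2" | "j = k - 1"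
    by linarith
  then show ?thesis
  proof cases
    case 1
    then show ?thesis
      using all_types_realized_level_0 meets by simp
  next
    case 2
    then have "realized_pp j"
      using realized_pp_level_1 meets by simp
    moreover from this have "realized_pc j"
      using realized_pc_if_pp 2 k_ge_5 by simp
    ultimately show ?thesis
      using realized_eq_cc_if_cp realized_pc_iff_cp 2 k_ge_5 by simp
  next
    case 3
    then have "realized_pc j"
      using realized_pc_or_pp[OF meets] realized_pc_if_pp by auto
    then have "realized_cp j"
      using realized_pc_iff_cp by simp
    then show ?thesis
      using realized_eq_cc_if_cp realized_pp_if_cp \<open>realized_pc j\<close> 3 by auto
  next
    case 4
    then have "realized_eq j \<or> realized_cc j" "realized_cc j \<or> realized_cp j"
      using realized_eq_or_cc_top_level realized_cc_or_cp_top_level meets by auto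
    moreover have "3 \<le> j"
      using 4 k_ge_5 by simp
    ultimately have "realized_eq j" "realized_cc j" "realized_cp j"
      using realized_eq_cp_if_cc realized_cc_if_eq_cp by blast+
    then show ?thesis
      using realized_pp_if_cp realized_pc_iff_cp \<open>3 \<le> j\<close> by auto
  qed
qed

lemma realizable_if_meets:
  assumes "meets j Y1 Y2" "y1 \<in> Y1" "y2 \<in> Y2"
  shows "realizable Y1 Y2 y1 y2"
  using all_types_realized[OF assms(1)] assms
  unfolding realized_eq_def realized_cc_def realized_cp_def realized_pc_def realized_pp_def
  by (cases "y1 \<in> Y2"; cases "y2 \<in> Y1"; cases "y1 = y2") auto

theorem C_full: "full_family X k C"
  unfolding full_family_def
proof (intro allI impI)
  fix d
  assume d: "choice_fun X k d"
  show "d \<in> C"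
  proof (rule mem_if_pairs_realizable[OF d])
    fix Y1 Y2
    assume Y: "Y1 \<in> binom X k" "Y2 \<in> binom X k"
    then have "d Y1 \<in> Y1" "d Y2 \<in> Y2"
      using d by (auto simp: choice_fun_def)
    then show "realizable Y1 Y2 (d Y1) (d Y2)"
      using realizable_diag realizable_if_meets Y by (cases "Y1 = Y2") (auto simp: meets_def)
  qed
qed

end

theorem claim12p2:
  fixes X :: "'a set" and k :: nat
    and F :: "(nat \<times> ('a list \<Rightarrow> 'a)) set"
    and C :: "('a set \<Rightarrow> 'a) set"
  assumes "finite X" and "k \<ge> 5" and "k + 7 \<le> card X"
    and "clone_on X F"
    and "(\<exists>g. (3, g) \<in> F \<and> (\<forall>xs \<in> tuples X 3. g xs = gstar xs))
         \<or> (\<forall>a \<in> tuples X 3. distinct a \<longrightarrow>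
              (\<exists>g. (3, g) \<in> F \<and> g a = a ! 0 \<and>
                   (\<forall>b \<in> tuples X 3. \<not> distinct b \<longrightarrow> g b = gstar b)))"
    and "C \<noteq> {}" and "\<forall>c \<in> C. choice_fun X k c"
    and "symmetric_family X k C"
    and "\<forall>f \<in> F. closed_under X k C f"
  shows "full_family X k C"
proof -
  have "\<exists>g. closed_under X k C (3, g) \<and> g a = a ! 0 \<and> (\<forall>b \<in> tuples X 3. \<not> distinct b \<longrightarrow> g b = gstar b)"
    if "a \<in> tuples X 3" "distinct a" for a
    using assms(5)
  proof
    assume "\<exists>g. (3, g) \<in> F \<and> (\<forall>xs \<in> tuples X 3. g xs = gstar xs)"
    then obtain g where "(3, g) \<in> F" "\<forall>xs \<in> tuples X 3. g xs = gstar xs"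
      by blast
    then show ?thesis
      using assms(9) gstar_distinct that by metis
  qed (use assms(9) that in blast)
  then interpret gstar_closed_family X k C
    using assms by unfold_locales auto
  show ?thesis
    by (rule C_full)
qed

end
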